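(* For each $n\in\mathbb{N}$ let $A_n\subseteq\mathcal{R}$ be L-measurable, and suppose $\lim_{N\to\infty}M\big(\bigcap_{n=1}^N A_n\big)$ exists in $\mathcal{R}$. Let $X\subseteq\mathcal{R}$ be outer measurable. Then $X\cap\bigcap_{n=1}^\infty A_n$ is outer measurable, the limit $\lim_{N\to\infty}M_u\big(X\cap\bigcap_{n=1}^N A_n\big)$ exists in $\mathcal{R}$, and $$\lim_{N\to\infty}M_u\Big(X\cap\bigcap_{n=1}^N A_n\Big)=M_u\Big(X\cap\bigcap_{n=1}^\infty A_n\Big).$$
   Context: $\mathcal{R}$ denotes the Levi-Civita field: functions $x:\mathbb{Q}\to\mathbb{R}$ with left-finite support, with componentwise addition and formal power series multiplication, ordered by $x>0$ iff $x\ne0$ and $x[\min\operatorname{supp}x]>0$; it is a non-Archimedean ordered field extension of $\mathbb{R}$, Cauchy complete in the order topology, in which all limits and series are taken (a series $\sum a_n$ converges iff $a_n\to0$). An interval is a set $[a,b],[a,b),(a,b]$ or $(a,b)$ with $a<b$ in $\mathcal{R}$, of length $l=b-a$. A cover of $A\subseteq\mathcal{R}$ is a sequence of intervals $(S_n)_{n\ge1}$ with $A\subseteq\bigcup_n S_n$ and $\sum_n l(S_n)$ convergent in $\mathcal{R}$. $A$ is called outer measurable if the infimum $\inf\{\sum_n l(S_n): (S_n)\text{ a cover of }A\}$ exists in $\mathcal{R}$; this infimum is then called the outer measure $M_u(A)$. An outer measurable set $A\subseteq\mathcal{R}$ is L-measurable if for every outer measurable $B\subseteq\mathcal{R}$ both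 $A\cap B$ and $A^c\cap B$ (where $A^c=\mathcal{R}\setminus A$) are outer measurable and $M_u(B)=M_u(A\cap B)+M_u(A^c\cap B)$; then its L-measure is $M(A):=M_u(A)$. Finite intersections of L-measurable sets are L-measurable, so $M(\bigcap_{n=1}^N A_n)$ is defined. *)

theory Defs
  imports Complex_Main
begin

section \<open>The Levi-Civita field (as an ordered additive group with order topology)\<close>

typedef lc = "{x :: rat \<Rightarrow> real. \<forall>q. finite {p. p < q \<and> x p \<noteq> 0}}"
  morphisms Rep_lc Abs_lc
  by (rule exI[of _ "\<lambda>_. 0"]) simp

setup_lifting type_definition_lc

lemma lf_plus:
  assumes "\<And>q. finite {p. p < q \<and> x p \<noteq> (0::real)}" "\<And>q. finite {p. p < q \<and> y p \<noteq> (0::real)}"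
  shows "finite {p. p < r \<and> x p + y p \<noteq> 0}" "finite {p. p < r \<and> x p - y p \<noteq> 0}"
proof -
  have "{p. p < r \<and> x p + y p \<noteq> 0} \<subseteq> {p. p < r \<and> x p \<noteq> 0} \<union> {p. p < r \<and> y p \<noteq> 0}"
    by auto
  then show "finite {p. p < r \<and> x p + y p \<noteq> 0}"
    using assms(1,2) by (meson finite_UnI finite_subset)
  have "{p. p < r \<and> x p - y p \<noteq> 0} \<subseteq> {p. p < r \<and> x p \<noteq> 0} \<union> {p. p < r \<and> y p \<noteq> 0}"
    by auto
  then show "finite {p. p < r \<and> x p - y p \<noteq> 0}"
    using assms(1,2) by (meson finite_UnI finite_subset)
qed

instantiation lc :: ab_group_add
begin

lift_definition zero_lc :: lc is "\<lambda>_. 0" by simp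

lift_definition plus_lc :: "lc \<Rightarrow> lc \<Rightarrow> lc" is "\<lambda>x y q. x q + y q"
  using lf_plus by blast

lift_definition uminus_lc :: "lc \<Rightarrow> lc" is "\<lambda>x q. - x q" by simp

lift_definition minus_lc :: "lc \<Rightarrow> lc \<Rightarrow> lc" is "\<lambda>x y q. x q - y q"
  using lf_plus by blast

instance
  by standard (transfer; simp add: fun_eq_iff algebra_simps)+

end

text \<open>Formal power series multiplication (not needed for the statement; recorded for
  completeness of the description of the field).\<close>
definition lc_mult :: "lc \<Rightarrow> lc \<Rightarrow> lc" where
  "lc_mult x y = Abs_lc (\<lambda>q. \<Sum>(a, b) \<in> {(a, b). a + b = q \<and> Rep_lc x a \<noteq> 0 \<and> Rep_lc y b \<noteq> 0}.
       Rep_lc x a * Rep_lc y b)"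

definition lc_pos :: "lc \<Rightarrow> bool" where
  "lc_pos x \<longleftrightarrow> (\<exists>q. Rep_lc x q > 0 \<and> (\<forall>p<q. Rep_lc x p = 0))"

lemma lc_lead_exists:
  assumes "x \<noteq> 0"
  shows "\<exists>q. Rep_lc x q \<noteq> 0 \<and> (\<forall>p<q. Rep_lc x p = 0)"
proof -
  have "\<exists>s. Rep_lc x s \<noteq> 0"
  proof (rule ccontr)
    assume "\<not> (\<exists>s. Rep_lc x s \<noteq> 0)"
    then have "Rep_lc x = Rep_lc 0" by (simp add: zero_lc.rep_eq fun_eq_iff)
    then show False using assms Rep_lc_inject by blast
  qed
  then obtain s where s: "Rep_lc x s \<noteq> 0" by blast
  define F where "F = {p. p < s \<and> Rep_lc x p \<noteq> 0}"
  have finF: "finite F" using Rep_lc[of x] unfolding F_def by simp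
  show ?thesis
  proof (cases "F = {}")
    case True
    have "\<forall>p<s. Rep_lc x p = 0"
    proof (intro allI impI)
      fix p assume "p < s"
      show "Rep_lc x p = 0"
      proof (rule ccontr)
        assume "Rep_lc x p \<noteq> 0"
        with \<open>p < s\<close> have "p \<in> F" unfolding F_def by simp
        with True show False by simp
      qed
    qed
    with s show ?thesis by blast
  next
    case False
    define m where "m = Min F"
    have mF: "m \<in> F" using finF False unfolding m_def by (rule Min_in)
    have m1: "Rep_lc x m \<noteq> 0" and m2: "m < s" using mF unfolding F_def by simp_all
    have "\<forall>p<m. Rep_lc x p = 0"
    proof (intro allI impI)
      fix p assume pm: "p < m"
      show "Rep_lc x p = 0"
      proof (rule ccontr)
        assume "Rep_lc x p \<noteq> 0"
        moreover have "p < s" using pm m2 by (rule less_trans)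
        ultimately have "p \<in> F" unfolding F_def by simp
        then have "m \<le> p" unfolding m_def using finF by (simp add: Min_le)
        with pm show False by simp
      qed
    qed
    with m1 show ?thesis by blast
  qed
qed

lemma lc_lead_unique:
  assumes "Rep_lc x q \<noteq> 0" "\<forall>p<q. Rep_lc x p = 0"
    and "Rep_lc x q' \<noteq> 0" "\<forall>p<q'. Rep_lc x p = 0"
  shows "q = q'"
  using assms by (cases q q' rule: linorder_cases) auto

lemma lc_pos_or_neg: "x \<noteq> 0 \<Longrightarrow> lc_pos x \<or> lc_pos (- x)"
proof -
  assume "x \<noteq> 0"
  then obtain q where q: "Rep_lc x q \<noteq> 0" "\<forall>p<q. Rep_lc x p = 0"
    using lc_lead_exists by blast
  show ?thesis
  proof (cases "Rep_lc x q > 0")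
    case True then show ?thesis using q unfolding lc_pos_def by blast
  next
    case False
    then have "Rep_lc (- x) q > 0" using q(1) by (simp add: uminus_lc.rep_eq)
    moreover have "\<forall>p<q. Rep_lc (- x) p = 0" using q(2) by (simp add: uminus_lc.rep_eq)
    ultimately show ?thesis unfolding lc_pos_def by blast
  qed
qed

lemma lc_pos_not_neg: "lc_pos x \<Longrightarrow> \<not> lc_pos (- x)"
proof
  assume "lc_pos x" "lc_pos (- x)"
  then obtain q q' where q: "Rep_lc x q > 0" "\<forall>p<q. Rep_lc x p = 0"
    and q': "- Rep_lc x q' > 0" "\<forall>p<q'. - Rep_lc x p = 0"
    unfolding lc_pos_def uminus_lc.rep_eq by blast
  have "q = q'" by (rule lc_lead_unique[of x]) (use q q' in auto)
  then show False using q q' by simp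
qed

lemma lc_pos_zero: "\<not> lc_pos 0"
  unfolding lc_pos_def zero_lc.rep_eq by simp

lemma lc_pos_add:
  assumes "lc_pos x" "lc_pos y" shows "lc_pos (x + y)"
proof -
  obtain q1 where q1: "Rep_lc x q1 > 0" "\<forall>p<q1. Rep_lc x p = 0" using assms(1) lc_pos_def by auto
  obtain q2 where q2: "Rep_lc y q2 > 0" "\<forall>p<q2. Rep_lc y p = 0" using assms(2) lc_pos_def by auto
  show ?thesis unfolding lc_pos_def plus_lc.rep_eq
  proof (cases q1 q2 rule: linorder_cases)
    case less then show "\<exists>q. 0 < Rep_lc x q + Rep_lc y q \<and> (\<forall>p<q. Rep_lc x p + Rep_lc y p = 0)"
      using q1 q2 by (intro exI[of _ q1]) auto
  next
    case equal then show "\<exists>q. 0 < Rep_lc x q + Rep_lc y q \<and> (\<forall>p<q. Rep_lc x p + Rep_lc y p = 0)"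
      using q1 q2 by (intro exI[of _ q1]) auto
  next
    case greater then show "\<exists>q. 0 < Rep_lc x q + Rep_lc y q \<and> (\<forall>p<q. Rep_lc x p + Rep_lc y p = 0)"
      using q1 q2 by (intro exI[of _ q2]) auto
  qed
qed

instantiation lc :: linordered_ab_group_add
begin

definition less_lc :: "lc \<Rightarrow> lc \<Rightarrow> bool" where
  "less_lc x y \<longleftrightarrow> lc_pos (y - x)"

definition less_eq_lc :: "lc \<Rightarrow> lc \<Rightarrow> bool" where
  "less_eq_lc x y \<longleftrightarrow> x = y \<or> lc_pos (y - x)"

instance
proof
  fix x y z :: lc
  show "(x < y) = (x \<le> y \<and> \<not> y \<le> x)"
    unfolding less_lc_def less_eq_lc_def
    using lc_pos_not_neg[of "y - x"] lc_pos_zero by auto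
  show "x \<le> x" by (simp add: less_eq_lc_def)
  show "x \<le> y \<Longrightarrow> y \<le> z \<Longrightarrow> x \<le> z"
  proof -
    assume a: "x \<le> y" "y \<le> z"
    have e: "z - x = (z - y) + (y - x)" by simp
    show "x \<le> z" using a lc_pos_add[of "z - y" "y - x"] unfolding less_eq_lc_def e
      by auto
  qed
  show "x \<le> y \<Longrightarrow> y \<le> x \<Longrightarrow> x = y"
    unfolding less_eq_lc_def using lc_pos_not_neg[of "y - x"] by auto
  show "x \<le> y \<or> y \<le> x"
    unfolding less_eq_lc_def using lc_pos_or_neg[of "y - x"] by auto
  show "x \<le> y \<Longrightarrow> z + x \<le> z + y"
  proof -
    have e: "(z + y) - (z + x) = y - x" by (rule add_diff_cancel_left)
    assume "x \<le> y"
    then show "z + x \<le> z + y" unfolding less_eq_lc_def e by auto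
  qed
qed

end

instantiation lc :: linorder_topology
begin

definition open_lc :: "lc set \<Rightarrow> bool" where
  "open_lc = generate_topology (range lessThan \<union> range greaterThan)"

instance by standard (simp add: open_lc_def)

end

section \<open>Outer measure and L-measurability\<close>

definition lc_interval :: "lc set \<Rightarrow> lc \<Rightarrow> lc \<Rightarrow> bool" where
  "lc_interval S a b \<longleftrightarrow> a < b \<and> (S = {a..b} \<or> S = {a..<b} \<or> S = {a<..b} \<or> S = {a<..<b})"

definition cover_sum :: "lc set \<Rightarrow> lc \<Rightarrow> bool" where
  "cover_sum A s \<longleftrightarrow> (\<exists>S a b. (\<forall>n. lc_interval (S n) (a n) (b n)) \<and> A \<subseteq> (\<Union>n. S n)
       \<and> (\<lambda>n. b n - a n) sums s)"

definition is_inf :: "lc set \<Rightarrow> lc \<Rightarrow> bool" where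
  "is_inf T m \<longleftrightarrow> (\<forall>t\<in>T. m \<le> t) \<and> (\<forall>l. (\<forall>t\<in>T. l \<le> t) \<longrightarrow> l \<le> m)"

definition outer_measurable :: "lc set \<Rightarrow> bool" where
  "outer_measurable A \<longleftrightarrow> (\<exists>m. is_inf {s. cover_sum A s} m)"

definition Mu :: "lc set \<Rightarrow> lc" where
  "Mu A = (THE m. is_inf {s. cover_sum A s} m)"

definition L_measurable :: "lc set \<Rightarrow> bool" where
  "L_measurable A \<longleftrightarrow> outer_measurable A \<and>
     (\<forall>B. outer_measurable B \<longrightarrow>
        outer_measurable (A \<inter> B) \<and> outer_measurable (- A \<inter> B) \<and>
        Mu B = Mu (A \<inter> B) + Mu (- A \<inter> B))"

definition Lmeasure :: "lc set \<Rightarrow> lc" where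
  "Lmeasure A = Mu A"

end

theory Submission
  imports Defs "HOL-Library.Nat_Bijection"
begin

text \<open>Write \<open>B\<^sub>N\<close> for the finite intersections of the \<open>A\<^sub>n\<close>, \<open>x\<^sub>N = M\<^sub>u(X \<inter> B\<^sub>N)\<close> and
  \<open>y\<^sub>N = M(B\<^sub>N)\<close>. Splitting by the L-measurable set \<open>A\<^sub>N\<^sub>+\<^sub>1\<close>, the part cut off from
  \<open>X \<inter> B\<^sub>N\<close> lies inside the part cut off from \<open>B\<^sub>N\<close>, so the decrements of the decreasing sequence
  \<open>x\<close> are dominated by those of the convergent sequence \<open>y\<close>. The order topology of the
  Levi-Civita field is ultrametric, given by the valuation; hence \<open>x\<close> is Cauchy and converges,
  to \<open>L\<close> say. A lower bound for the covers of \<open>Y = X \<inter> \<Inter>A\<^sub>n\<close> bounds every \<open>x\<^sub>N\<close>, hence \<open>L\<close>.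
  Conversely \<open>X \<inter> B\<^sub>N\<close> is covered by \<open>Y\<close> together with the sets \<open>B\<^sub>N\<^sub>+\<^sub>k - A\<^sub>N\<^sub>+\<^sub>k\<^sub>+\<^sub>1\<close>,
  whose measures telescope to \<open>y\<^sub>N - lim y\<close>; merging countably many near-optimal covers gives
  \<open>x\<^sub>N \<le> s + (y\<^sub>N - lim y)\<close> for every cover of \<open>Y\<close> of length \<open>s\<close>, so \<open>L \<le> s\<close>. Thus \<open>L\<close> is the
  infimum of the cover lengths of \<open>Y\<close>.\<close>

section \<open>Valuation neighbourhoods in the Levi-Civita field\<close>

text \<open>The elements of valuation at least \<open>q\<close>. These additive subgroups form a neighbourhood basis
  of \<open>0\<close> for the order topology (\<open>tendsto_lc_nbhd_iff\<close>).\<close>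
definition lc_nbhd :: "rat \<Rightarrow> lc set" where
  "lc_nbhd q = {z. \<forall>p<q. Rep_lc z p = 0}"

definition lc_monomial :: "rat \<Rightarrow> lc" where
  "lc_monomial q = Abs_lc (\<lambda>p. if p = q then 1 else 0)"

lemma lc_nbhd_zero [simp]: "0 \<in> lc_nbhd q"
  by (simp add: lc_nbhd_def zero_lc.rep_eq)

lemma lc_nbhd_add: "x \<in> lc_nbhd q \<Longrightarrow> y \<in> lc_nbhd q \<Longrightarrow> x + y \<in> lc_nbhd q"
  by (simp add: lc_nbhd_def plus_lc.rep_eq)

lemma lc_nbhd_diff: "x \<in> lc_nbhd q \<Longrightarrow> y \<in> lc_nbhd q \<Longrightarrow> x - y \<in> lc_nbhd q"
  by (simp add: lc_nbhd_def minus_lc.rep_eq)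

lemma lc_nbhd_uminus_iff [simp]: "- x \<in> lc_nbhd q \<longleftrightarrow> x \<in> lc_nbhd q"
  by (simp add: lc_nbhd_def uminus_lc.rep_eq)

lemma lc_nbhd_minus_commute: "x - y \<in> lc_nbhd q \<longleftrightarrow> y - x \<in> lc_nbhd q"
  using lc_nbhd_uminus_iff[of "y - x"] by simp

lemma lc_nbhd_sum: "(\<And>i. i \<in> I \<Longrightarrow> f i \<in> lc_nbhd q) \<Longrightarrow> sum f I \<in> lc_nbhd q"
  by (induction I rule: infinite_finite_induct) (auto intro: lc_nbhd_add)

lemma lc_nbhd_antimono: "q' \<le> q \<Longrightarrow> lc_nbhd q \<subseteq> lc_nbhd q'"
  by (auto simp: lc_nbhd_def)

lemma Rep_lc_monomial: "Rep_lc (lc_monomial q) = (\<lambda>p. if p = q then 1 else 0)"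
proof -
  have "finite {p. p < r \<and> (if p = q then 1 else 0 :: real) \<noteq> 0}" for r
    by (rule finite_subset[of _ "{q}"]) auto
  then show ?thesis
    by (simp add: lc_monomial_def Abs_lc_inverse)
qed

lemma lc_monomial_pos: "0 < lc_monomial q"
  unfolding less_lc_def lc_pos_def by (rule exI[of _ q]) (simp add: Rep_lc_monomial)

lemma lc_monomial_in_nbhd: "lc_monomial q \<in> lc_nbhd q"
  by (simp add: lc_nbhd_def Rep_lc_monomial)

lemma lc_pos_leading:
  assumes "0 < w"
  obtains e where "Rep_lc w e > 0" "\<forall>p<e. Rep_lc w p = 0"
  using assms by (auto simp: less_lc_def lc_pos_def)

lemma lc_nbhd_less:
  assumes "Rep_lc w e > 0" "\<forall>p<e. Rep_lc w p = 0" "z \<in> lc_nbhd q" "e < q"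
  shows "z < w"
  unfolding less_lc_def lc_pos_def
  by (rule exI[of _ e]) (use assms in \<open>auto simp: lc_nbhd_def minus_lc.rep_eq\<close>)

lemma lc_nbhd_less_monomial: "z \<in> lc_nbhd q' \<Longrightarrow> q < q' \<Longrightarrow> z < lc_monomial q"
  by (rule lc_nbhd_less[of _ q]) (auto simp: Rep_lc_monomial)

lemma lc_nbhd_below:
  assumes "0 < w"
  obtains q where "\<And>z. z \<in> lc_nbhd q \<Longrightarrow> z < w"
proof -
  obtain e where "Rep_lc w e > 0" "\<forall>p<e. Rep_lc w p = 0"
    using assms by (rule lc_pos_leading)
  then show thesis
    using lc_nbhd_less that[of "e + 1"] by simp
qed

text \<open>Between \<open>0\<close> and \<open>w \<in> lc_nbhd q\<close>, the leading term of \<open>z\<close> cannot be of lower order than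
  \<open>q\<close>: it would be the leading term of \<open>w - z\<close>, with the wrong sign.\<close>
lemma lc_nbhd_convex:
  assumes "0 \<le> z" "z \<le> w" "w \<in> lc_nbhd q"
  shows "z \<in> lc_nbhd q"
proof (rule ccontr)
  assume z_notin: "z \<notin> lc_nbhd q"
  then have "0 < z" using assms(1) by (cases "z = 0") auto
  then obtain e where e: "Rep_lc z e > 0" "\<forall>p<e. Rep_lc z p = 0"
    by (rule lc_pos_leading)
  have "e < q"
    using e(2) z_notin by (force simp: lc_nbhd_def)
  have "z < w"
    using assms(2,3) z_notin by (cases "z = w") auto
  then obtain r where r: "Rep_lc (w - z) r > 0" "\<forall>p<r. Rep_lc (w - z) p = 0"
    by (metis diff_gt_0_iff_gt lc_pos_leading)
  have w_low: "Rep_lc w p = 0" if "p < q" for p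
    using assms(3) that by (simp add: lc_nbhd_def)
  have "Rep_lc (w - z) e < 0"
    using e(1) w_low[OF \<open>e < q\<close>] by (simp add: minus_lc.rep_eq)
  moreover have "Rep_lc (w - z) p = 0" if "p < e" for p
    using e(2) w_low[of p] that \<open>e < q\<close> by (simp add: minus_lc.rep_eq)
  ultimately show False
    using r by (cases r e rule: linorder_cases) auto
qed

lemma tendsto_lc_nbhd_iff:
  "X \<longlonglongrightarrow> (l::lc) \<longleftrightarrow> (\<forall>q. eventually (\<lambda>n. X n - l \<in> lc_nbhd q) sequentially)"
proof
  assume X: "X \<longlonglongrightarrow> l"
  show "\<forall>q. eventually (\<lambda>n. X n - l \<in> lc_nbhd q) sequentially"
  proof
    fix q
    have "eventually (\<lambda>n. l - lc_monomial q < X n \<and> X n < l + lc_monomial q) sequentially"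
      using X lc_monomial_pos[of q] unfolding order_tendsto_iff
      by (auto intro: eventually_conj)
    then show "eventually (\<lambda>n. X n - l \<in> lc_nbhd q) sequentially"
    proof eventually_elim
      case (elim n)
      then show ?case
        using lc_nbhd_convex[OF _ _ lc_monomial_in_nbhd, of "X n - l"]
          lc_nbhd_convex[OF _ _ lc_monomial_in_nbhd, of "l - X n"] lc_nbhd_minus_commute
        by (cases "l \<le> X n") (auto simp: algebra_simps)
    qed
  qed
next
  assume small: "\<forall>q. eventually (\<lambda>n. X n - l \<in> lc_nbhd q) sequentially"
  show "X \<longlonglongrightarrow> l"
    unfolding order_tendsto_iff
  proof safe
    fix a assume "a < l"
    then obtain q where q: "\<And>z. z \<in> lc_nbhd q \<Longrightarrow> z < l - a"
      by (metis diff_gt_0_iff_gt lc_nbhd_below)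
    show "eventually (\<lambda>n. a < X n) sequentially"
      using small[rule_format, of q]
      by eventually_elim (use q lc_nbhd_minus_commute in \<open>force simp: algebra_simps\<close>)
  next
    fix a assume "l < a"
    then obtain q where q: "\<And>z. z \<in> lc_nbhd q \<Longrightarrow> z < a - l"
      by (metis diff_gt_0_iff_gt lc_nbhd_below)
    show "eventually (\<lambda>n. X n < a) sequentially"
      using small[rule_format, of q]
      by eventually_elim (use q in \<open>force simp: algebra_simps\<close>)
  qed
qed

section \<open>Completeness and series\<close>

definition lc_Cauchy :: "(nat \<Rightarrow> lc) \<Rightarrow> bool" where
  "lc_Cauchy X \<longleftrightarrow> (\<forall>q. \<exists>K. \<forall>m\<ge>K. \<forall>n\<ge>K. X m - X n \<in> lc_nbhd q)"

lemma lc_CauchyI_ordered: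
  assumes "\<And>q. \<exists>K. \<forall>m n. K \<le> n \<longrightarrow> n \<le> m \<longrightarrow> X m - X n \<in> lc_nbhd q"
  shows "lc_Cauchy X"
  unfolding lc_Cauchy_def
proof
  fix q
  obtain K where K: "\<And>m n. K \<le> n \<Longrightarrow> n \<le> m \<Longrightarrow> X m - X n \<in> lc_nbhd q"
    using assms by blast
  show "\<exists>K. \<forall>m\<ge>K. \<forall>n\<ge>K. X m - X n \<in> lc_nbhd q"
    by (metis K lc_nbhd_minus_commute nat_le_linear)
qed

text \<open>Completeness: along a Cauchy sequence every coefficient is eventually constant, and the
  eventual coefficients form the limit.\<close>
lemma lc_Cauchy_convergent:
  assumes "lc_Cauchy X"
  shows "convergent X"
proof -
  obtain K where K: "\<And>q m n. m \<ge> K q \<Longrightarrow> n \<ge> K q \<Longrightarrow> X m - X n \<in> lc_nbhd q"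
    using assms unfolding lc_Cauchy_def by metis
  have agree: "Rep_lc (X m) p = Rep_lc (X n) p" if "m \<ge> K q" "n \<ge> K q" "p < q" for m n p q
    using K[OF that(1,2)] that(3) by (simp add: lc_nbhd_def minus_lc.rep_eq)
  define l0 where "l0 p = Rep_lc (X (K (p + 1))) p" for p
  have l0: "l0 p = Rep_lc (X n) p" if "n \<ge> K q" "p < q" for n p q
    using agree[where m="max n (K (p + 1))" and n="K (p + 1)" and q="p + 1" and p=p]
      agree[where m="max n (K (p + 1))" and n=n and q=q and p=p] that
    by (simp add: l0_def)
  have "finite {p. p < r \<and> l0 p \<noteq> 0}" for r
  proof (rule finite_subset)
    show "{p. p < r \<and> l0 p \<noteq> 0} \<subseteq> {p. p < r \<and> Rep_lc (X (K r)) p \<noteq> 0}"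
      using l0[where n="K r" and q=r] by auto
  qed (use Rep_lc[of "X (K r)"] in simp)
  then have Rep_l: "Rep_lc (Abs_lc l0) = l0"
    by (simp add: Abs_lc_inverse)
  have "X \<longlonglongrightarrow> Abs_lc l0"
    unfolding tendsto_lc_nbhd_iff eventually_sequentially
    using l0 by (fastforce simp: lc_nbhd_def minus_lc.rep_eq Rep_l)
  then show ?thesis
    by (auto simp: convergent_def)
qed

lemma LIMSEQ_imp_lc_Cauchy:
  assumes "X \<longlonglongrightarrow> (l::lc)"
  shows "lc_Cauchy X"
  unfolding lc_Cauchy_def
proof
  fix q
  obtain K where K: "\<And>n. n \<ge> K \<Longrightarrow> X n - l \<in> lc_nbhd q"
    using assms unfolding tendsto_lc_nbhd_iff eventually_sequentially by blast
  have "X m - X n = (X m - l) - (X n - l)" for m n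
    by simp
  then show "\<exists>K. \<forall>m\<ge>K. \<forall>n\<ge>K. X m - X n \<in> lc_nbhd q"
    using K lc_nbhd_diff by metis
qed

lemma lc_convergent_decseq_dominated:
  fixes x y :: "nat \<Rightarrow> lc"
  assumes "decseq x" and decrements: "\<And>n. x n - x (Suc n) \<le> y n - y (Suc n)" and "convergent y"
  shows "convergent x"
proof (rule lc_Cauchy_convergent, rule lc_CauchyI_ordered)
  have dominated: "x n - x m \<le> y n - y m" if "n \<le> m" for n m
    using that
  proof (induction m rule: dec_induct)
    case (step m)
    then show ?case
      using add_mono[OF step.IH decrements[of m]] by simp
  qed simp
  fix q
  obtain K where K: "\<And>m n. m \<ge> K \<Longrightarrow> n \<ge> K \<Longrightarrow> y n - y m \<in> lc_nbhd q"
    using \<open>convergent y\<close> LIMSEQ_imp_lc_Cauchy unfolding convergent_def lc_Cauchy_def by metis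
  have "x m - x n \<in> lc_nbhd q" if "K \<le> n" "n \<le> m" for m n
    using lc_nbhd_convex[of "x n - x m" "y n - y m" q] \<open>decseq x\<close> dominated[of n m] K[where m=m and n=n] that
    by (simp add: decseq_def lc_nbhd_minus_commute[of "x m"])
  then show "\<exists>K. \<forall>m n. K \<le> n \<longrightarrow> n \<le> m \<longrightarrow> x m - x n \<in> lc_nbhd q"
    by blast
qed

lemma lc_sums_terms_nbhd:
  fixes f :: "nat \<Rightarrow> lc"
  assumes "f sums s"
  shows "eventually (\<lambda>n. f n \<in> lc_nbhd q) sequentially"
proof -
  obtain K where K: "\<And>m n. m \<ge> K \<Longrightarrow> n \<ge> K \<Longrightarrow> (\<Sum>i<m. f i) - (\<Sum>i<n. f i) \<in> lc_nbhd q"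
    using assms LIMSEQ_imp_lc_Cauchy unfolding sums_def lc_Cauchy_def by metis
  show ?thesis
    unfolding eventually_sequentially by (metis K le_SucI add_diff_cancel_left' sum.lessThan_Suc)
qed

lemma lc_sums_if_terms_nbhd:
  fixes f :: "nat \<Rightarrow> lc"
  assumes small: "\<And>q. eventually (\<lambda>n. f n \<in> lc_nbhd q) sequentially"
  obtains s where "f sums s"
proof -
  have "lc_Cauchy (\<lambda>n. \<Sum>i<n. f i)"
  proof (rule lc_CauchyI_ordered)
    fix q
    obtain K where K: "\<And>n. n \<ge> K \<Longrightarrow> f n \<in> lc_nbhd q"
      using small[of q] unfolding eventually_sequentially by blast
    have "(\<Sum>i<m. f i) - (\<Sum>i<n. f i) = (\<Sum>i\<in>{n..<m}. f i)" if "n \<le> m" for m n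
      using sum_diff_nat_ivl[of 0 n m f] that by (simp add: atLeast0LessThan)
    then show "\<exists>K. \<forall>m n. K \<le> n \<longrightarrow> n \<le> m \<longrightarrow> (\<Sum>i<m. f i) - (\<Sum>i<n. f i) \<in> lc_nbhd q"
      using K by (metis atLeastLessThan_iff lc_nbhd_sum order_trans)
  qed
  then show thesis
    using lc_Cauchy_convergent that by (auto simp: convergent_def sums_def)
qed

lemma lc_telescope_sums:
  fixes f :: "nat \<Rightarrow> lc"
  assumes "f \<longlonglongrightarrow> c"
  shows "(\<lambda>n. f n - f (Suc n)) sums (f 0 - c)"
  using assms unfolding sums_def sum_lessThan_telescope' tendsto_lc_nbhd_iff
  by (simp add: lc_nbhd_minus_commute[of c])

lemma sums_sum_le:
  fixes f :: "nat \<Rightarrow> 'a::{ordered_comm_monoid_add,linorder_topology}"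
  assumes "f sums s" "finite I" "\<And>n. 0 \<le> f n"
  shows "sum f I \<le> s"
  using sum_le_suminf[OF sums_summable[OF assms(1)] assms(2)] assms(3) sums_unique[OF assms(1)]
  by simp

lemma lc_double_series_terms_nbhd:
  fixes g :: "nat \<Rightarrow> nat \<Rightarrow> lc"
  assumes nonneg: "\<And>k j. 0 \<le> g k j" and rows: "\<And>k. g k sums c k"
    and small: "\<And>q. eventually (\<lambda>k. c k \<in> lc_nbhd q) sequentially"
  shows "eventually (\<lambda>i. case_prod g (prod_decode i) \<in> lc_nbhd q) sequentially"
proof -
  obtain K where K: "\<And>k. k \<ge> K \<Longrightarrow> c k \<in> lc_nbhd q"
    using small[of q] unfolding eventually_sequentially by blast
  have "eventually (\<lambda>j. \<forall>k\<in>{..<K}. g k j \<in> lc_nbhd q) sequentially"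
    by (intro eventually_ball_finite ballI lc_sums_terms_nbhd[OF rows]) simp
  then obtain J where J: "\<And>k j. k < K \<Longrightarrow> j \<ge> J \<Longrightarrow> g k j \<in> lc_nbhd q"
    unfolding eventually_sequentially by blast
  have outside: "g k j \<in> lc_nbhd q" if "(k, j) \<notin> {..<K} \<times> {..<J}" for k j
  proof (cases "k < K")
    case False
    have "g k j \<le> c k"
      using sums_sum_le[OF rows, of "{j}"] nonneg by simp
    then show ?thesis
      using False K nonneg lc_nbhd_convex by (meson not_less)
  qed (use that J in auto)
  have "{i. case_prod g (prod_decode i) \<notin> lc_nbhd q} \<subseteq> prod_decode -` ({..<K} \<times> {..<J})"
  proof
    fix i assume "i \<in> {i. case_prod g (prod_decode i) \<notin> lc_nbhd q}"
    then show "i \<in> prod_decode -` ({..<K} \<times> {..<J})"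
      using outside[of "fst (prod_decode i)" "snd (prod_decode i)"] by (auto simp: split_beta)
  qed
  moreover have "finite (prod_decode -` ({..<K} \<times> {..<J}))"
    by (rule finite_vimageI) (auto simp: inj_prod_decode)
  ultimately show ?thesis
    unfolding cofinite_eq_sequentially[symmetric] eventually_cofinite by (rule finite_subset)
qed

lemma lc_double_series_partial_le:
  fixes g :: "nat \<Rightarrow> nat \<Rightarrow> lc"
  assumes nonneg: "\<And>k j. 0 \<le> g k j" and rows: "\<And>k. g k sums c k"
    and bound: "\<And>K. (\<Sum>k<K. c k) \<le> R"
  shows "(\<Sum>i<n. case_prod g (prod_decode i)) \<le> R"
proof -
  define P where "P = prod_decode ` {..<n}"
  obtain K J where "\<forall>k\<in>fst ` P. k < K" "\<forall>j\<in>snd ` P. j < J"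
    using finite_nat_set_iff_bounded by (metis P_def finite_imageI finite_lessThan)
  then have P_sub: "P \<subseteq> {..<K} \<times> {..<J}"
    by force
  have "(\<Sum>i<n. case_prod g (prod_decode i)) = (\<Sum>x\<in>P. case_prod g x)"
    unfolding P_def by (subst sum.reindex) (auto intro: inj_on_subset[OF inj_prod_decode])
  also have "\<dots> \<le> (\<Sum>x\<in>{..<K} \<times> {..<J}. case_prod g x)"
    using P_sub nonneg by (intro sum_mono2) auto
  also have "\<dots> = (\<Sum>k<K. \<Sum>j<J. g k j)"
    by (simp add: sum.cartesian_product)
  also have "\<dots> \<le> (\<Sum>k<K. c k)"
    using sums_sum_le[OF rows] nonneg by (intro sum_mono) simp
  also have "\<dots> \<le> R"
    by (rule bound)
  finally show ?thesis .
qed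

section \<open>Outer measure and covers\<close>

lemma is_inf_unique: "is_inf T m \<Longrightarrow> is_inf T m' \<Longrightarrow> m = m'"
  unfolding is_inf_def by (meson order.antisym)

lemma Mu_is_inf: "outer_measurable A \<Longrightarrow> is_inf {s. cover_sum A s} (Mu A)"
  unfolding outer_measurable_def Mu_def by (metis is_inf_unique theI)

lemma Mu_eqI: "is_inf {s. cover_sum A s} m \<Longrightarrow> Mu A = m"
  unfolding Mu_def by (metis is_inf_unique the_equality)

lemma Mu_le_cover_sum: "outer_measurable A \<Longrightarrow> cover_sum A s \<Longrightarrow> Mu A \<le> s"
  using Mu_is_inf unfolding is_inf_def by blast

lemma le_Mu: "outer_measurable A \<Longrightarrow> (\<And>s. cover_sum A s \<Longrightarrow> l \<le> s) \<Longrightarrow> l \<le> Mu A"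
  using Mu_is_inf unfolding is_inf_def by blast

lemma cover_sum_subset: "A \<subseteq> B \<Longrightarrow> cover_sum B s \<Longrightarrow> cover_sum A s"
  unfolding cover_sum_def by blast

lemma Mu_mono: "A \<subseteq> B \<Longrightarrow> outer_measurable A \<Longrightarrow> outer_measurable B \<Longrightarrow> Mu A \<le> Mu B"
  by (meson Mu_le_cover_sum cover_sum_subset le_Mu)

lemma cover_sum_nonneg: "cover_sum A s \<Longrightarrow> 0 \<le> s"
proof -
  assume "cover_sum A s"
  then obtain a b where "\<And>n. a n < b n" "(\<lambda>n. b n - a n) sums s"
    unfolding cover_sum_def lc_interval_def by blast
  then show "0 \<le> s"
    using sums_sum_le[of _ s "{}"] by (simp add: less_imp_le)
qed

lemma Mu_nonneg: "outer_measurable A \<Longrightarrow> 0 \<le> Mu A"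
  by (rule le_Mu) (auto dest: cover_sum_nonneg)

lemma Mu_approx:
  assumes "outer_measurable A" "0 < d"
  obtains s where "cover_sum A s" "s < Mu A + d"
proof (rule ccontr)
  assume "\<not> thesis"
  then have "Mu A + d \<le> Mu A"
    using that by (intro le_Mu[OF assms(1)]) (meson not_less)
  with assms(2) show False
    by simp
qed

text \<open>The covers of the \<open>A k\<close> are interleaved into one via the pairing bijection \<open>prod_decode\<close>.\<close>
lemma cover_sum_UN:
  assumes covers: "\<And>k. cover_sum (A k) (c k)"
    and small: "\<And>q. eventually (\<lambda>k. c k \<in> lc_nbhd q) sequentially"
    and bound: "\<And>K. (\<Sum>k<K. c k) \<le> R"
  obtains T where "cover_sum (\<Union>k. A k) T" "T \<le> R"
proof -
  obtain S a b where I: "\<And>k j. lc_interval (S k j) (a k j) (b k j)"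
    and sub: "\<And>k. A k \<subseteq> (\<Union>j. S k j)" and sums: "\<And>k. (\<lambda>j. b k j - a k j) sums c k"
  proof -
    have "\<forall>k. \<exists>S a b. (\<forall>j. lc_interval (S j) (a j) (b j)) \<and> A k \<subseteq> (\<Union>j. S j)
        \<and> (\<lambda>j. b j - a j) sums c k"
      using covers unfolding cover_sum_def by blast
    then show thesis
      unfolding choice_iff using that by blast
  qed
  define g where "g k j = b k j - a k j" for k j
  have nonneg: "0 \<le> g k j" for k j
    using I[of k j] by (auto simp: g_def lc_interval_def)
  have rows: "g k sums c k" for k
    using sums unfolding g_def .
  obtain T where T: "(\<lambda>i. case_prod g (prod_decode i)) sums T"
    using lc_double_series_terms_nbhd[OF nonneg rows small] by (rule lc_sums_if_terms_nbhd)
  show thesis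
  proof
    have "(\<Union>k. A k) \<subseteq> (\<Union>i. case_prod S (prod_decode i))"
    proof
      fix x assume "x \<in> (\<Union>k. A k)"
      then obtain k j where "x \<in> S k j"
        using sub by blast
      then show "x \<in> (\<Union>i. case_prod S (prod_decode i))"
        by (intro UN_I[of "prod_encode (k, j)"]) auto
    qed
    then show "cover_sum (\<Union>k. A k) T"
      unfolding cover_sum_def using I T
      by (intro exI[of _ "\<lambda>i. case_prod S (prod_decode i)"] exI[of _ "\<lambda>i. case_prod a (prod_decode i)"]
          exI[of _ "\<lambda>i. case_prod b (prod_decode i)"]) (simp add: g_def split_beta)
    show "T \<le> R"
      using T lc_double_series_partial_le[OF nonneg rows bound] unfolding sums_def
      by (intro LIMSEQ_le_const2) auto
  qed
qed

text \<open>The errors allowed on the \<open>D k\<close> are monomials of increasing order, so that their sum stays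
  below any given positive monomial.\<close>
lemma covers_approx_sums_Mu:
  fixes q :: rat
  assumes omD: "\<And>k. outer_measurable (D k)" and d: "(\<lambda>k. Mu (D k)) sums d"
  obtains c where "\<And>k. cover_sum (D k) (c k)"
    and "\<And>r. eventually (\<lambda>k. c k \<in> lc_nbhd r) sequentially"
    and "\<And>K. (\<Sum>k<K. c k) \<le> d + lc_monomial q"
proof -
  define \<epsilon> where "\<epsilon> k = lc_monomial (q + 1 + of_nat k)" for k
  have "\<forall>k. \<exists>t. cover_sum (D k) t \<and> t < Mu (D k) + \<epsilon> k"
    unfolding \<epsilon>_def using Mu_approx[OF omD lc_monomial_pos] by metis
  then obtain c where c_cover: "\<And>k. cover_sum (D k) (c k)"
    and c_less: "\<And>k. c k < Mu (D k) + \<epsilon> k"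
    unfolding choice_iff by blast
  have \<epsilon>_nbhd: "\<epsilon> k \<in> lc_nbhd r" if "r \<le> q + 1 + of_nat k" for k r
    using lc_nbhd_antimono[OF that] lc_monomial_in_nbhd unfolding \<epsilon>_def by blast
  have "eventually (\<lambda>k. c k \<in> lc_nbhd r) sequentially" for r
  proof -
    obtain K :: nat where "r - q - 1 < of_nat K"
      using reals_Archimedean2 by blast
    then have "eventually (\<lambda>k. \<epsilon> k \<in> lc_nbhd r) sequentially"
      unfolding eventually_sequentially
      by (intro exI[of _ K] allI impI \<epsilon>_nbhd) (simp add: of_nat_mono add.commute le_diff_eq [symmetric]
          order.trans[OF less_imp_le])
    with lc_sums_terms_nbhd[OF d, where q=r] show ?thesis
    proof eventually_elim
      case (elim k)
      show ?case
        using lc_nbhd_convex[OF cover_sum_nonneg[OF c_cover] less_imp_le[OF c_less]]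
          lc_nbhd_add[OF elim] by blast
    qed
  qed
  moreover have "(\<Sum>k<K. c k) \<le> d + lc_monomial q" for K
  proof -
    have "(\<Sum>k<K. c k) \<le> (\<Sum>k<K. Mu (D k)) + (\<Sum>k<K. \<epsilon> k)"
      using c_less by (simp add: sum.distrib[symmetric] sum_mono less_imp_le)
    also have "(\<Sum>k<K. Mu (D k)) \<le> d"
      using sums_sum_le[OF d] Mu_nonneg[OF omD] by simp
    also have "(\<Sum>k<K. \<epsilon> k) < lc_monomial q"
      by (rule lc_nbhd_less_monomial[of _ "q + 1"]) (auto intro!: lc_nbhd_sum \<epsilon>_nbhd)
    finally show ?thesis
      by simp
  qed
  ultimately show thesis
    using c_cover that by blast
qed

lemma Mu_le_cover_sum_add:
  assumes omZ: "outer_measurable Z" and sub: "Z \<subseteq> Y \<union> (\<Union>k. D k)"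
    and omD: "\<And>k. outer_measurable (D k)" and d: "(\<lambda>k. Mu (D k)) sums d"
    and Y: "cover_sum Y s"
  shows "Mu Z \<le> s + d"
proof (rule ccontr)
  assume "\<not> Mu Z \<le> s + d"
  then obtain q where q: "\<And>z. z \<in> lc_nbhd q \<Longrightarrow> z < Mu Z - (s + d)"
    by (metis diff_gt_0_iff_gt lc_nbhd_below not_le)
  define u where "u = lc_monomial q"
  obtain c where c_cover: "\<And>k. cover_sum (D k) (c k)"
    and c_small: "\<And>r. eventually (\<lambda>k. c k \<in> lc_nbhd r) sequentially"
    and c_partial: "\<And>K. (\<Sum>k<K. c k) \<le> d + u"
    unfolding u_def using covers_approx_sums_Mu[OF omD d, where q=q] by blast
  have covers: "cover_sum (case_nat Y D k) (case_nat s c k)" for k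
    using Y c_cover by (cases k) simp_all
  have small: "eventually (\<lambda>k. case_nat s c k \<in> lc_nbhd r) sequentially" for r
    using c_small[of r] by (simp flip: eventually_sequentially_Suc[of "\<lambda>k. case_nat s c k \<in> _"])
  have bound: "(\<Sum>k<K. case_nat s c k) \<le> s + d + u" for K
    using c_partial[of "K - 1"] c_partial[of 0] cover_sum_nonneg[OF Y]
    by (cases K) (simp_all del: sum.lessThan_Suc add: sum.lessThan_Suc_shift add.assoc add_increasing)
  obtain T where T: "cover_sum (\<Union>k. case_nat Y D k) T" "T \<le> s + d + u"
    by (rule cover_sum_UN[OF covers small bound])
  have "Z \<subseteq> (\<Union>k. case_nat Y D k)"
  proof
    fix z assume "z \<in> Z"
    then consider "z \<in> case_nat Y D 0" | k where "z \<in> case_nat Y D (Suc k)"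
      using sub by auto
    then show "z \<in> (\<Union>k. case_nat Y D k)"
      by cases blast+
  qed
  then have "Mu Z \<le> s + d + u"
    using order_trans[OF Mu_le_cover_sum[OF omZ cover_sum_subset[OF _ T(1)]] T(2)] by blast
  moreover have "u < Mu Z - (s + d)"
    unfolding u_def by (rule q[OF lc_monomial_in_nbhd])
  ultimately show False
    by (simp add: less_diff_eq add.commute add.left_commute)
qed

section \<open>Intersections of L-measurable sets\<close>

lemma L_measurable_outer_measurable: "L_measurable A \<Longrightarrow> outer_measurable A"
  unfolding L_measurable_def by blast

lemma L_measurable_Int: "L_measurable A \<Longrightarrow> outer_measurable E \<Longrightarrow> outer_measurable (A \<inter> E)"
  unfolding L_measurable_def by blast

lemma L_measurable_Compl_Int: "L_measurable A \<Longrightarrow> outer_measurable E \<Longrightarrow> outer_measurable (- A \<inter> E)"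
  unfolding L_measurable_def by blast

lemma L_measurable_Mu_split:
  "L_measurable A \<Longrightarrow> outer_measurable E \<Longrightarrow> Mu E = Mu (A \<inter> E) + Mu (- A \<inter> E)"
  unfolding L_measurable_def by blast

lemma L_measurable_Mu_diff_mono:
  assumes "L_measurable A" "E \<subseteq> F" "outer_measurable E" "outer_measurable F"
  shows "Mu E - Mu (A \<inter> E) \<le> Mu F - Mu (A \<inter> F)"
proof -
  have "Mu (- A \<inter> E) \<le> Mu (- A \<inter> F)"
    using assms by (intro Mu_mono L_measurable_Compl_Int) auto
  then show ?thesis
    using L_measurable_Mu_split[OF assms(1,3)] L_measurable_Mu_split[OF assms(1,4)]
    by (simp add: algebra_simps)
qed

lemma outer_measurable_Int_INT_atMost:
  fixes N :: nat
  assumes "\<And>n. L_measurable (A n)" "outer_measurable X"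
  shows "outer_measurable (X \<inter> (\<Inter>n\<le>N. A n))"
proof (induction N)
  case (Suc N)
  have "X \<inter> (\<Inter>n\<le>Suc N. A n) = A (Suc N) \<inter> (X \<inter> (\<Inter>n\<le>N. A n))"
    by (auto simp: atMost_Suc)
  then show ?case
    using L_measurable_Int[OF assms(1) Suc.IH] by simp
qed (use L_measurable_Int[OF assms] in \<open>simp add: Int_commute\<close>)

lemma outer_measurable_INT_atMost:
  fixes N :: nat
  assumes "\<And>n. L_measurable (A n)"
  shows "outer_measurable (\<Inter>n\<le>N. A n)"
  using outer_measurable_Int_INT_atMost[of A "A 0" N, OF assms L_measurable_outer_measurable[OF assms]]
  by (simp add: Int_absorb1 INT_lower)

lemma INT_atMost_subset_first_exit:
  "(\<Inter>n\<le>N. A n) \<subseteq> (\<Inter>n. A n) \<union> (\<Union>k. - A (Suc (N + k)) \<inter> (\<Inter>n\<le>N + k. A n))"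
proof
  fix z assume z: "z \<in> (\<Inter>n\<le>N. A n)"
  show "z \<in> (\<Inter>n. A n) \<union> (\<Union>k. - A (Suc (N + k)) \<inter> (\<Inter>n\<le>N + k. A n))"
  proof (cases "z \<in> (\<Inter>n. A n)")
    case False
    then obtain m where m: "z \<notin> A m" "\<forall>n<m. z \<in> A n"
      using exists_least_iff[of "\<lambda>n. z \<notin> A n"] by blast
    then have "N < m"
      using z by (meson INT_E atMost_iff not_less)
    then have "z \<in> - A (Suc (N + (m - Suc N))) \<inter> (\<Inter>n\<le>N + (m - Suc N). A n)"
      using m by auto
    then show ?thesis
      by blast
  qed simp
qed

lemma Mu_Int_INT_atMost_le_cover_sum:
  assumes A: "\<And>n. L_measurable (A n)" and X: "outer_measurable X"
    and lim: "(\<lambda>N. Mu (\<Inter>n\<le>N. A n)) \<longlonglongrightarrow> l"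
    and cover: "cover_sum (X \<inter> (\<Inter>n. A n)) s"
  shows "Mu (X \<inter> (\<Inter>n\<le>N. A n)) \<le> s + (Mu (\<Inter>n\<le>N. A n) - l)"
proof -
  define B where "B N = (\<Inter>n\<le>N. A n)" for N
  have B: "outer_measurable (B N)" for N
    unfolding B_def by (rule outer_measurable_INT_atMost[OF A])
  define D where "D k = - A (Suc (N + k)) \<inter> B (N + k)" for k
  have B_Suc: "A (Suc n) \<inter> B n = B (Suc n)" for n
    by (auto simp: B_def atMost_Suc)
  have "Mu (D k) = Mu (B (k + N)) - Mu (B (Suc k + N))" for k
    using L_measurable_Mu_split[OF A[of "Suc (N + k)"] B[of "N + k"]]
    by (simp add: D_def B_Suc add.commute)
  moreover have "(\<lambda>k. Mu (B (k + N)) - Mu (B (Suc k + N))) sums (Mu (B N) - l)"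
    using lc_telescope_sums[OF LIMSEQ_ignore_initial_segment[OF lim[folded B_def], of N]] by simp
  ultimately have "(\<lambda>k. Mu (D k)) sums (Mu (B N) - l)"
    by simp
  moreover have "B N \<subseteq> (\<Inter>n. A n) \<union> (\<Union>k. D k)"
    unfolding B_def D_def by (rule INT_atMost_subset_first_exit)
  then have "X \<inter> B N \<subseteq> X \<inter> (\<Inter>n. A n) \<union> (\<Union>k. D k)"
    by blast
  moreover have "outer_measurable (D k)" for k
    unfolding D_def by (rule L_measurable_Compl_Int[OF A B])
  moreover have "outer_measurable (X \<inter> B N)"
    unfolding B_def by (rule outer_measurable_Int_INT_atMost[OF A X])
  ultimately have "Mu (X \<inter> B N) \<le> s + (Mu (B N) - l)"
    using Mu_le_cover_sum_add[OF _ _ _ _ cover] by blast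
  then show ?thesis
    by (simp only: B_def)
qed

lemma Mu_Int_INT_atMost_tendsto:
  assumes A: "\<And>n. L_measurable (A n)" and X: "outer_measurable X"
    and conv: "convergent (\<lambda>N. Mu (\<Inter>n\<le>N. A n))"
  shows "outer_measurable (X \<inter> (\<Inter>n. A n)) \<and>
    (\<lambda>N. Mu (X \<inter> (\<Inter>n\<le>N. A n))) \<longlonglongrightarrow> Mu (X \<inter> (\<Inter>n. A n))"
proof -
  define x where "x N = Mu (X \<inter> (\<Inter>n\<le>N. A n))" for N
  define y where "y N = Mu (\<Inter>n\<le>N. A n)" for N
  have XB: "outer_measurable (X \<inter> (\<Inter>n\<le>N. A n))" for N
    by (rule outer_measurable_Int_INT_atMost[OF A X])
  have B: "outer_measurable (\<Inter>n\<le>N. A n)" for N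
    by (rule outer_measurable_INT_atMost[OF A])
  have B_Suc: "A (Suc N) \<inter> (\<Inter>n\<le>N. A n) = (\<Inter>n\<le>Suc N. A n)" for N
    by (auto simp: atMost_Suc)
  have "decseq x"
    unfolding x_def by (intro decseq_SucI Mu_mono XB) (auto simp: atMost_Suc)
  moreover have "x N - x (Suc N) \<le> y N - y (Suc N)" for N
    using L_measurable_Mu_diff_mono[OF A[of "Suc N"] _ XB B, of N N]
    by (simp add: x_def y_def B_Suc Int_left_commute[of "A (Suc N)"])
  ultimately have "convergent x"
    using conv unfolding y_def[symmetric] by (rule lc_convergent_decseq_dominated)
  then obtain L where x_lim: "x \<longlonglongrightarrow> L"
    unfolding convergent_def by blast
  obtain l where y_lim: "y \<longlonglongrightarrow> l"
    using conv unfolding y_def convergent_def by blast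
  have "L \<le> s" if cover: "cover_sum (X \<inter> (\<Inter>n. A n)) s" for s
  proof (rule ccontr)
    assume "\<not> L \<le> s"
    then have "l < l + (L - s)"
      by simp
    then obtain N where "y N < l + (L - s)"
      using order_tendstoD(2)[OF y_lim] eventually_sequentially by (metis order_refl)
    then have "s + (y N - l) < L"
      by (simp add: algebra_simps)
    moreover have "x N \<le> s + (y N - l)"
      unfolding x_def y_def by (rule Mu_Int_INT_atMost_le_cover_sum[OF A X y_lim[unfolded y_def] cover])
    moreover have "L \<le> x N"
      using \<open>decseq x\<close> x_lim by (rule decseq_ge)
    ultimately show False
      by simp
  qed
  moreover have "m \<le> L" if lower: "\<forall>s\<in>{s. cover_sum (X \<inter> (\<Inter>n. A n)) s}. m \<le> s" for m
  proof -
    have "m \<le> x N" for N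
    proof -
      have sub: "X \<inter> (\<Inter>n. A n) \<subseteq> X \<inter> (\<Inter>n\<le>N. A n)"
        by blast
      show ?thesis
        unfolding x_def using lower cover_sum_subset[OF sub] by (intro le_Mu[OF XB]) simp
    qed
    then show ?thesis
      using x_lim by (intro LIMSEQ_le_const) auto
  qed
  ultimately have inf: "is_inf {s. cover_sum (X \<inter> (\<Inter>n. A n)) s} L"
    unfolding is_inf_def by blast
  then have "outer_measurable (X \<inter> (\<Inter>n. A n))"
    unfolding outer_measurable_def by blast
  with x_lim show ?thesis
    unfolding Mu_eqI[OF inf] x_def by blast
qed

theorem lemma4p2:
  fixes A :: "nat \<Rightarrow> lc set" and X :: "lc set"
  assumes "\<And>n. n \<ge> 1 \<Longrightarrow> L_measurable (A n)"
    and "convergent (\<lambda>N. Lmeasure (\<Inter>n\<in>{1..N}. A n))"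
    and "outer_measurable X"
  shows "outer_measurable (X \<inter> (\<Inter>n\<in>{1..}. A n)) \<and>
         convergent (\<lambda>N. Mu (X \<inter> (\<Inter>n\<in>{1..N}. A n))) \<and>
         (\<lambda>N. Mu (X \<inter> (\<Inter>n\<in>{1..N}. A n))) \<longlonglongrightarrow> Mu (X \<inter> (\<Inter>n\<in>{1..}. A n))"
proof -
  have "{1..Suc N} = Suc ` {..N}" for N
    by (simp add: atMost_atLeast0)
  then have INT_shift: "(\<Inter>n\<in>{1..Suc N}. A n) = (\<Inter>n\<le>N. A (Suc n))" for N
    by (simp add: image_image)
  have "{1..} = range Suc"
    using not0_implies_Suc by (fastforce simp: image_iff)
  then have INT_all: "(\<Inter>n\<in>{1..}. A n) = (\<Inter>n. A (Suc n))"
    by (simp add: image_image)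
  have "convergent (\<lambda>N. Mu (\<Inter>n\<in>{1..Suc N}. A n))"
    using assms(2) unfolding convergent_Suc_iff[of "\<lambda>N. Mu (\<Inter>n\<in>{1..N}. A n)"] Lmeasure_def .
  then have "outer_measurable (X \<inter> (\<Inter>n. A (Suc n))) \<and>
      (\<lambda>N. Mu (X \<inter> (\<Inter>n\<in>{1..Suc N}. A n))) \<longlonglongrightarrow> Mu (X \<inter> (\<Inter>n. A (Suc n)))"
    unfolding INT_shift using assms(1) by (intro Mu_Int_INT_atMost_tendsto[OF _ assms(3)]) simp_all
  with LIMSEQ_imp_Suc[of "\<lambda>N. Mu (X \<inter> (\<Inter>n\<in>{1..N}. A n))"] show ?thesis
    unfolding INT_all convergent_def by blast
qed

end
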